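(* Let $1<a_1<a_2$ be coprime integers, $S=\langle a_1,a_2\rangle$, and $t\in(1,\infty)$. If $r_0(t)$ is rational and $|a_1a_2P(t)|>a_1$, then $t$ is perspicacious, i.e. $[0,a_2]$ is not contained in the closure of $\Delta_t(S)$.
   Context: $S=\{\lambda_1a_1+\lambda_2a_2:\lambda_1,\lambda_2\in\mathbb{N}_0\}$. For $t\in[1,\infty)$ and $(u,v)\in\mathbb{R}^2$, $\|(u,v)\|_t=(|u|^t+|v|^t)^{1/t}$. For $x\in S$, $Z(x)=\{(m,n)\in\mathbb{N}_0^2: ma_1+na_2=x\}$, $\mathscr{L}_t(x)=\{\|f\|_t: f\in Z(x)\}$, $\Delta_t(x)$ is the set of differences between consecutive elements of $\mathscr{L}_t(x)$ (in increasing order), and $\Delta_t(S)=\bigcup_{x\in S}\Delta_t(x)$. A parameter $t\in(1,\infty)$ is dull if $[0,a_2]$ is contained in the closure of $\Delta_t(S)$, and perspicacious otherwise. Define $\mu_t(r)=\left\|\left(\frac{1-r}{a_1},\frac{r}{a_2}\right)\right\|_t$ for $r\in[0,1]$, $r_0(t)=\min\{r\in[0,1]:\mu_t(r)=\frac{1}{a_2}\}$, and $P(t)=\mu_t'(r_0(t))$ (derivative in $r$). *)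

theory Defs
  imports "HOL-Analysis.Analysis"
begin

definition numsg :: "nat \<Rightarrow> nat \<Rightarrow> nat set" where
  "numsg a1 a2 = {l1 * a1 + l2 * a2 | l1 l2. True}"

definition tnorm :: "real \<Rightarrow> real \<times> real \<Rightarrow> real" where
  "tnorm t uv = (\<bar>fst uv\<bar> powr t + \<bar>snd uv\<bar> powr t) powr (1 / t)"

definition factorizations :: "nat \<Rightarrow> nat \<Rightarrow> nat \<Rightarrow> (nat \<times> nat) set" where
  "factorizations a1 a2 x = {(m, n). m * a1 + n * a2 = x}"

definition tlengths :: "real \<Rightarrow> nat \<Rightarrow> nat \<Rightarrow> nat \<Rightarrow> real set" where
  "tlengths t a1 a2 x = (\<lambda>(m, n). tnorm t (real m, real n)) ` factorizations a1 a2 x"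

definition tdelta :: "real \<Rightarrow> nat \<Rightarrow> nat \<Rightarrow> nat \<Rightarrow> real set" where
  "tdelta t a1 a2 x = {z - y | y z. y \<in> tlengths t a1 a2 x \<and> z \<in> tlengths t a1 a2 x \<and> y < z
      \<and> (\<forall>w \<in> tlengths t a1 a2 x. \<not> (y < w \<and> w < z))}"

definition tdelta_S :: "real \<Rightarrow> nat \<Rightarrow> nat \<Rightarrow> real set" where
  "tdelta_S t a1 a2 = (\<Union>x \<in> numsg a1 a2. tdelta t a1 a2 x)"

definition dull :: "real \<Rightarrow> nat \<Rightarrow> nat \<Rightarrow> bool" where
  "dull t a1 a2 \<longleftrightarrow> {0 .. real a2} \<subseteq> closure (tdelta_S t a1 a2)"

definition perspicacious :: "real \<Rightarrow> nat \<Rightarrow> nat \<Rightarrow> bool" where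
  "perspicacious t a1 a2 \<longleftrightarrow> \<not> dull t a1 a2"

definition mu :: "real \<Rightarrow> nat \<Rightarrow> nat \<Rightarrow> real \<Rightarrow> real" where
  "mu t a1 a2 r = tnorm t ((1 - r) / real a1, r / real a2)"

definition r0 :: "real \<Rightarrow> nat \<Rightarrow> nat \<Rightarrow> real" where
  "r0 t a1 a2 = (LEAST r. r \<in> {0..1} \<and> mu t a1 a2 r = 1 / real a2)"

definition Pder :: "real \<Rightarrow> nat \<Rightarrow> nat \<Rightarrow> real" where
  "Pder t a1 a2 = deriv (mu t a1 a2) (r0 t a1 a2)"

end

theory Submission
  imports Defs
begin

text \<open>A factorization \<open>(m, n)\<close> of \<open>x\<close> has length \<open>x mu (n a2 / x)\<close>, and \<open>mu\<close> is convex with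
  \<open>mu 0 = 1/a1 > 1/a2 = mu r0 = mu 1\<close>, so its slope \<open>P\<close> at \<open>r0\<close> is nonpositive.
  Let \<open>y < z\<close> be consecutive lengths of \<open>x\<close>. If \<open>z \<le> x/a2\<close>, trading \<open>a2\<close> copies of \<open>a1\<close> for
  \<open>a1\<close> copies of \<open>a2\<close> raises a length by at most \<open>a1\<close>, so \<open>z - y \<le> a1\<close>. Otherwise \<open>z\<close> comes
  from the decreasing branch \<open>[0, r0]\<close> of \<open>mu\<close>, and by coprimality and convexity
  \<open>z - y \<ge> -P a1 a2\<close>, except in two configurations near \<open>r0\<close>. There the gaps tend, as
  \<open>x \<rightarrow> \<infinity>\<close>, to \<open>-P a1 a2\<close> or to \<open>-P d + a1 m' / a2\<close> with \<open>m' < a2\<close> and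
  \<open>d = r0 x - n a2 \<in> [0, a1 a2)\<close>; since \<open>r0\<close> is rational, \<open>d\<close> ranges over a finite grid.
  So all but finitely many gaps avoid a neighbourhood of a finite set, and a point of
  \<open>(a1, min (-P a1 a2) a2)\<close>, a nonempty interval by hypothesis, escapes the closure.\<close>

lemma tnorm_nonneg: "0 \<le> tnorm t uv"
  unfolding tnorm_def by simp

lemma tnorm_scale:
  assumes "0 < t"
  shows "tnorm t (c * u, c * v) = \<bar>c\<bar> * tnorm t (u, v)"
proof -
  have "\<bar>c * u\<bar> powr t + \<bar>c * v\<bar> powr t = \<bar>c\<bar> powr t * (\<bar>u\<bar> powr t + \<bar>v\<bar> powr t)"
    by (simp add: abs_mult powr_mult distrib_left)
  then show ?thesis
    using assms unfolding tnorm_def by (simp add: powr_mult powr_powr)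
qed

lemma tnorm_le_1_iff:
  assumes "0 < t"
  shows "tnorm t (u, v) \<le> 1 \<longleftrightarrow> \<bar>u\<bar> powr t + \<bar>v\<bar> powr t \<le> 1"
proof -
  have "s powr (1 / t) \<le> 1 \<longleftrightarrow> s \<le> 1" if "0 \<le> s" for s :: real
    using that assms powr_le1[of "1 / t" s] powr_mono2[of t "s powr (1 / t)" 1]
    by (auto simp: powr_powr)
  then show ?thesis
    unfolding tnorm_def by simp
qed

lemma tnorm_eq_0_iff:
  assumes "0 < t"
  shows "tnorm t (u, v) = 0 \<longleftrightarrow> u = 0 \<and> v = 0"
  using assms unfolding tnorm_def by (simp add: add_nonneg_eq_0_iff)

lemma tnorm_zero_left:
  assumes "0 < t"
  shows "tnorm t (0, v) = \<bar>v\<bar>"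
  using assms unfolding tnorm_def by (simp add: powr_powr)

lemma tnorm_mono:
  assumes "0 < t" "\<bar>u\<bar> \<le> \<bar>u'\<bar>" "\<bar>v\<bar> \<le> \<bar>v'\<bar>"
  shows "tnorm t (u, v) \<le> tnorm t (u', v')"
  unfolding tnorm_def using assms by (auto intro!: powr_mono2 add_mono)

lemma abs_snd_le_tnorm:
  assumes "0 < t"
  shows "\<bar>v\<bar> \<le> tnorm t (u, v)"
  using tnorm_mono[OF assms, of 0 u v v] tnorm_zero_left[OF assms] by simp

lemma convex_on_powr_nonneg:
  assumes "1 \<le> p"
  shows "convex_on {0..} (\<lambda>x::real. x powr p)"
proof (rule convex_onI)
  fix \<theta> x y :: real
  assume \<theta>: "0 < \<theta>" "\<theta> < 1" and xy: "x \<in> {0..}" "y \<in> {0..}"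
  have shrink: "(c * z) powr p \<le> c * z powr p" if "0 \<le> c" "c \<le> 1" "0 \<le> z" for c z :: real
  proof -
    have "c powr p \<le> c"
      using that assms powr_mono'[of 1 p c] by (cases "c = 0") auto
    then show ?thesis
      using that by (simp add: powr_mult mult_right_mono)
  qed
  show "((1 - \<theta>) *\<^sub>R x + \<theta> *\<^sub>R y) powr p \<le> (1 - \<theta>) * x powr p + \<theta> * y powr p"
  proof (cases "x = 0 \<or> y = 0")
    case True
    then show ?thesis
      using shrink[of \<theta> y] shrink[of "1 - \<theta>" x] \<theta> xy by auto
  next
    case False
    then show ?thesis
      using convex_onD[OF powr_convex[OF assms], of \<theta> x y] \<theta> xy by simp
  qed
qed simp

lemma convex_on_abs_powr:
  assumes "1 \<le> p"
  shows "convex_on UNIV (\<lambda>x::real. \<bar>x\<bar> powr p)"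
proof (rule convex_onI)
  fix \<theta> x y :: real
  assume \<theta>: "0 < \<theta>" "\<theta> < 1"
  have "\<bar>(1 - \<theta>) *\<^sub>R x + \<theta> *\<^sub>R y\<bar> powr p \<le> ((1 - \<theta>) *\<^sub>R \<bar>x\<bar> + \<theta> *\<^sub>R \<bar>y\<bar>) powr p"
    using \<theta> abs_triangle_ineq[of "(1 - \<theta>) * x" "\<theta> * y"] assms
    by (intro powr_mono2) (auto simp: abs_mult)
  also have "\<dots> \<le> (1 - \<theta>) * \<bar>x\<bar> powr p + \<theta> * \<bar>y\<bar> powr p"
    using convex_onD[OF convex_on_powr_nonneg[OF assms], of \<theta> "\<bar>x\<bar>" "\<bar>y\<bar>"] \<theta> by simp
  finally show "\<bar>(1 - \<theta>) *\<^sub>R x + \<theta> *\<^sub>R y\<bar> powr p \<le> (1 - \<theta>) * \<bar>x\<bar> powr p + \<theta> * \<bar>y\<bar> powr p" .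
qed simp

lemma tnorm_unit_ball_convex:
  assumes "1 \<le> t" "tnorm t (u1, v1) \<le> 1" "tnorm t (u2, v2) \<le> 1" "0 \<le> \<theta>" "\<theta> \<le> 1"
  shows "tnorm t ((1 - \<theta>) * u1 + \<theta> * u2, (1 - \<theta>) * v1 + \<theta> * v2) \<le> 1"
proof -
  have t0: "0 < t"
    using assms(1) by simp
  have "\<bar>(1 - \<theta>) * u1 + \<theta> * u2\<bar> powr t + \<bar>(1 - \<theta>) * v1 + \<theta> * v2\<bar> powr t
      \<le> (1 - \<theta>) * (\<bar>u1\<bar> powr t + \<bar>v1\<bar> powr t) + \<theta> * (\<bar>u2\<bar> powr t + \<bar>v2\<bar> powr t)"
    using convex_onD[OF convex_on_abs_powr[OF assms(1)], of \<theta> u1 u2]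
      convex_onD[OF convex_on_abs_powr[OF assms(1)], of \<theta> v1 v2] assms(4,5)
    by (simp add: algebra_simps)
  also have "\<dots> \<le> (1 - \<theta>) * 1 + \<theta> * 1"
    using assms(2-5) tnorm_le_1_iff[OF t0] by (intro add_mono mult_left_mono) auto
  finally show ?thesis
    using tnorm_le_1_iff[OF t0] by simp
qed

text \<open>Minkowski's inequality: normalise both vectors and use the convexity of the unit ball.\<close>
lemma tnorm_triangle:
  assumes "1 \<le> t"
  shows "tnorm t (u1 + u2, v1 + v2) \<le> tnorm t (u1, v1) + tnorm t (u2, v2)"
proof -
  define \<alpha> \<beta> where "\<alpha> = tnorm t (u1, v1)" and "\<beta> = tnorm t (u2, v2)"
  have t0: "0 < t"
    using assms by simp
  show ?thesis
  proof (cases "\<alpha> = 0 \<or> \<beta> = 0")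
    case True
    then show ?thesis
      using tnorm_eq_0_iff[OF t0] tnorm_nonneg unfolding \<alpha>_def \<beta>_def by auto
  next
    case False
    then have "0 < \<alpha>" "0 < \<beta>"
      using tnorm_nonneg unfolding \<alpha>_def \<beta>_def by (metis less_eq_real_def)+
    define \<theta> where "\<theta> = \<beta> / (\<alpha> + \<beta>)"
    have "1 - \<theta> = \<alpha> / (\<alpha> + \<beta>)"
      using \<open>0 < \<alpha>\<close> \<open>0 < \<beta>\<close> unfolding \<theta>_def by (simp add: field_simps)
    then have comb: "(1 - \<theta>) * (w1 / \<alpha>) + \<theta> * (w2 / \<beta>) = (w1 + w2) / (\<alpha> + \<beta>)" for w1 w2
      using \<open>0 < \<alpha>\<close> \<open>0 < \<beta>\<close> unfolding \<theta>_def by (simp add: add_divide_distrib)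
    have "tnorm t (u1 / \<alpha>, v1 / \<alpha>) \<le> 1" "tnorm t (u2 / \<beta>, v2 / \<beta>) \<le> 1"
      using tnorm_scale[OF t0, of "1 / \<alpha>" u1 v1] tnorm_scale[OF t0, of "1 / \<beta>" u2 v2]
        \<open>0 < \<alpha>\<close> \<open>0 < \<beta>\<close> unfolding \<alpha>_def \<beta>_def by simp_all
    then have "tnorm t ((1 - \<theta>) * (u1 / \<alpha>) + \<theta> * (u2 / \<beta>), (1 - \<theta>) * (v1 / \<alpha>) + \<theta> * (v2 / \<beta>)) \<le> 1"
      using \<open>0 < \<alpha>\<close> \<open>0 < \<beta>\<close> unfolding \<theta>_def by (intro tnorm_unit_ball_convex[OF assms]) auto
    then have "tnorm t ((1 / (\<alpha> + \<beta>)) * (u1 + u2), (1 / (\<alpha> + \<beta>)) * (v1 + v2)) \<le> 1"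
      unfolding comb by simp
    then have "tnorm t (u1 + u2, v1 + v2) / (\<alpha> + \<beta>) \<le> 1"
      using tnorm_scale[OF t0, of "1 / (\<alpha> + \<beta>)" "u1 + u2" "v1 + v2"] \<open>0 < \<alpha>\<close> \<open>0 < \<beta>\<close> by simp
    then show ?thesis
      using \<open>0 < \<alpha>\<close> \<open>0 < \<beta>\<close> unfolding \<alpha>_def \<beta>_def by simp
  qed
qed

lemma convex_on_mu:
  assumes "1 \<le> t"
  shows "convex_on UNIV (mu t a1 a2)"
proof (rule convex_onI)
  fix \<theta> x y :: real
  assume "0 < \<theta>" "\<theta> < 1"
  have "mu t a1 a2 ((1 - \<theta>) *\<^sub>R x + \<theta> *\<^sub>R y)
      = tnorm t ((1 - \<theta>) * ((1 - x) / a1) + \<theta> * ((1 - y) / a1), (1 - \<theta>) * (x / a2) + \<theta> * (y / a2))"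
  proof -
    have "(1 - ((1 - \<theta>) * x + \<theta> * y)) / a1 = (1 - \<theta>) * ((1 - x) / a1) + \<theta> * ((1 - y) / a1)"
      "((1 - \<theta>) * x + \<theta> * y) / a2 = (1 - \<theta>) * (x / a2) + \<theta> * (y / a2)"
      by (simp_all add: divide_simps) (simp add: algebra_simps)
    then show ?thesis
      unfolding mu_def by simp
  qed
  also have "\<dots> \<le> tnorm t ((1 - \<theta>) * ((1 - x) / a1), (1 - \<theta>) * (x / a2)) + tnorm t (\<theta> * ((1 - y) / a1), \<theta> * (y / a2))"
    by (rule tnorm_triangle[OF assms])
  also have "\<dots> = (1 - \<theta>) * mu t a1 a2 x + \<theta> * mu t a1 a2 y"
    using assms \<open>0 < \<theta>\<close> \<open>\<theta> < 1\<close> unfolding mu_def by (simp only: tnorm_scale)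
  finally show "mu t a1 a2 ((1 - \<theta>) *\<^sub>R x + \<theta> *\<^sub>R y) \<le> (1 - \<theta>) * mu t a1 a2 x + \<theta> * mu t a1 a2 y" .
qed simp

lemma tnorm_le_snd_plus:
  assumes "1 < t" "0 < n" "0 \<le> m"
  shows "tnorm t (m, n) \<le> n + m powr t * n powr (1 - t)"
proof -
  define u where "u = (m / n) powr t"
  have "0 \<le> u"
    unfolding u_def by simp
  have "tnorm t (m, n) = n * (1 + u) powr (1 / t)"
    using assms unfolding tnorm_def u_def
    by (simp add: powr_divide powr_mult[symmetric] powr_powr field_simps)
  also have "\<dots> \<le> n * (1 + u)"
    using assms \<open>0 \<le> u\<close> powr_mono[of "1 / t" 1 "1 + u"] by (intro mult_left_mono) auto
  also have "\<dots> = n + m powr t * n powr (1 - t)"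
    unfolding u_def using assms by (simp add: powr_divide powr_diff field_simps)
  finally show ?thesis .
qed

lemma tnorm_le_snd_eventually:
  assumes "1 < t" "0 < e"
  shows "\<exists>N. \<forall>n\<ge>N. \<forall>m. 0 \<le> m \<and> m \<le> B \<longrightarrow> tnorm t (m, n) \<le> n + e"
proof -
  have "((\<lambda>n. \<bar>B\<bar> powr t * n powr (1 - t)) \<longlongrightarrow> \<bar>B\<bar> powr t * 0) at_top"
    using assms by (intro tendsto_mult tendsto_const tendsto_neg_powr filterlim_ident) auto
  then have "\<forall>\<^sub>F n in at_top. \<bar>B\<bar> powr t * n powr (1 - t) < e \<and> 0 < n"
    using assms by (auto intro: order_tendstoD eventually_conj eventually_gt_at_top)
  then obtain N where N: "\<And>n. N \<le> n \<Longrightarrow> \<bar>B\<bar> powr t * n powr (1 - t) < e \<and> 0 < n"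
    unfolding eventually_at_top_linorder by blast
  have "tnorm t (m, n) \<le> n + e" if "N \<le> n" "0 \<le> m" "m \<le> B" for m n
  proof -
    have "tnorm t (m, n) \<le> n + m powr t * n powr (1 - t)"
      using tnorm_le_snd_plus assms N[OF \<open>N \<le> n\<close>] that by blast
    also have "\<dots> \<le> n + \<bar>B\<bar> powr t * n powr (1 - t)"
      using that assms by (auto intro!: mult_right_mono powr_mono2)
    finally show ?thesis
      using N[OF \<open>N \<le> n\<close>] by simp
  qed
  then show ?thesis
    by blast
qed

lemma convex_on_diff_le_deriv_mult:
  fixes f :: "real \<Rightarrow> real"
  assumes "convex_on UNIV f" "(f has_real_derivative P) (at r)" "a \<le> b" "b \<le> r"
  shows "f b - f a \<le> P * (b - a)"
proof (cases "a = r")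
  case False
  then have "a < r"
    using assms by simp
  have tangent: "f a - f r \<ge> P * (a - r)"
    using convex_on_imp_above_tangent[OF assms(1)] assms(2) by simp
  have "f b \<le> (f r - f a) / (r - a) * (b - a) + f a"
    using convex_onD_Icc'[OF convex_on_subset[OF assms(1)], of a r b] assms by simp
  also have "(f r - f a) / (r - a) * (b - a) \<le> P * (b - a)"
  proof (rule mult_right_mono)
    show "(f r - f a) / (r - a) \<le> P"
      using tangent \<open>a < r\<close> by (simp add: pos_divide_le_eq algebra_simps)
  qed (use assms in simp)
  finally show ?thesis
    by simp
qed (use assms in simp)

lemma has_real_derivative_scaled_uniform:
  fixes f :: "real \<Rightarrow> real"
  assumes "(f has_real_derivative P) (at r)" "0 < e"
  shows "\<exists>X>0. \<forall>x\<ge>X. \<forall>s. \<bar>s\<bar> \<le> c \<longrightarrow> \<bar>x * (f (r + s / x) - f r) - P * s\<bar> \<le> e"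
proof -
  define C where "C = \<bar>c\<bar> + 1"
  have "0 < C"
    unfolding C_def by simp
  obtain \<delta> where "0 < \<delta>" and \<delta>:
    "\<And>h. h \<noteq> 0 \<Longrightarrow> \<bar>h\<bar> < \<delta> \<Longrightarrow> \<bar>(f (r + h) - f r) / h - P\<bar> < e / C"
    using LIM_D[OF DERIV_D[OF assms(1)], of "e / C"] assms \<open>0 < C\<close> by auto
  have "\<bar>x * (f (r + s / x) - f r) - P * s\<bar> \<le> e" if "C / \<delta> \<le> x" "\<bar>s\<bar> \<le> c" for x s
  proof (cases "s = 0")
    case False
    have "0 < x"
      using that \<open>0 < C\<close> \<open>0 < \<delta>\<close> by (smt (verit) divide_pos_pos)
    have "\<bar>s / x\<bar> < \<delta>"
      using that \<open>0 < x\<close> \<open>0 < \<delta>\<close> unfolding C_def by (simp add: field_simps)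
    have "x * (f (r + s / x) - f r) - P * s = s * ((f (r + s / x) - f r) / (s / x) - P)"
      using False \<open>0 < x\<close> by (simp add: field_simps)
    also have "\<bar>\<dots>\<bar> \<le> \<bar>s\<bar> * (e / C)"
      unfolding abs_mult using \<delta>[of "s / x"] \<open>\<bar>s / x\<bar> < \<delta>\<close> False \<open>0 < x\<close>
      by (intro mult_left_mono) auto
    also have "\<dots> \<le> C * (e / C)"
      using that assms unfolding C_def by (intro mult_right_mono) auto
    finally show ?thesis
      using \<open>0 < C\<close> by simp
  qed (use assms in simp)
  then show ?thesis
    using \<open>0 < C\<close> \<open>0 < \<delta>\<close> by (intro exI[of _ "C / \<delta>"]) auto
qed

lemma Least_mem_closed_real:
  fixes S :: "real set"
  assumes "closed S" "bdd_below S" "x \<in> S"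
  shows "(LEAST r. r \<in> S) \<in> S" "(LEAST r. r \<in> S) \<le> x"
proof -
  have "Inf S \<in> S"
    using closed_contains_Inf assms by blast
  moreover have "(LEAST r. r \<in> S) = Inf S"
    using \<open>Inf S \<in> S\<close> assms(2) by (intro Least_equality) (auto intro: cInf_lower)
  ultimately show "(LEAST r. r \<in> S) \<in> S" "(LEAST r. r \<in> S) \<le> x"
    using assms(2,3) by (auto intro: cInf_lower)
qed

lemma real_factorization:
  fixes a1 a2 m n x :: nat
  assumes "m * a1 + n * a2 = x"
  shows "real m * a1 + real n * a2 = x"
  using arg_cong[OF assms, of real] by simp

lemma factorization_shift:
  fixes a1 a2 m n :: nat
  assumes "m * a1 + n * a2 = x" "a2 \<le> m"
  shows "(m - a2) * a1 + (n + a1) * a2 = x"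
proof -
  have "(m - a2) * a1 = m * a1 - a2 * a1" "a2 * a1 \<le> m * a1" "(n + a1) * a2 = n * a2 + a2 * a1"
    using assms(2) by (simp_all add: diff_mult_distrib algebra_simps)
  then show ?thesis
    using assms(1) by linarith
qed

lemma factorization_lattice_step:
  fixes a1 a2 m n m' n' :: nat
  assumes "coprime a1 a2" "m * a1 + n * a2 = m' * a1 + n' * a2" "n < n'"
  shows "n + a1 \<le> n' \<and> a2 \<le> m"
proof -
  obtain k where k: "n' = n + k" "0 < k"
    using assms(3) less_imp_add_positive by blast
  then have "m * a1 = m' * a1 + k * a2"
    using assms(2) by (simp add: algebra_simps)
  then have eq: "k * a2 = (m - m') * a1"
    by (simp add: diff_mult_distrib)
  have "a1 dvd k * a2"
    unfolding eq by simp
  then have "a1 dvd k"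
    using assms(1) by (simp add: coprime_dvd_mult_left_iff)
  then have "n + a1 \<le> n'"
    using k by (simp add: dvd_imp_le)
  moreover have "a2 \<le> m"
  proof (cases "m - m' = 0")
    case True
    then show ?thesis
      using eq k by simp
  next
    case False
    have "a2 dvd (m - m') * a1"
      unfolding eq[symmetric] by simp
    then have "a2 dvd m - m'"
      using assms(1) by (simp add: coprime_commute coprime_dvd_mult_left_iff)
    then show ?thesis
      using False by (meson diff_le_self dvd_imp_le le_trans neq0_conv)
  qed
  ultimately show ?thesis ..
qed

lemma exists_factorization_fst_less:
  fixes a1 a2 m n :: nat
  assumes "m * a1 + n * a2 = x" "0 < a2"
  shows "\<exists>m' n'. m' * a1 + n' * a2 = x \<and> m' < a2 \<and> n \<le> n'"
  using assms(1)
proof (induction m arbitrary: n rule: less_induct)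
  case (less m)
  show ?case
  proof (cases "m < a2")
    case False
    then have "(m - a2) * a1 + (n + a1) * a2 = x"
      using factorization_shift less.prems by simp
    then show ?thesis
      using less.IH[of "m - a2" "n + a1"] False assms(2) by fastforce
  qed (use less.prems in blast)
qed

lemma finite_factorizations:
  assumes "0 < a1" "0 < a2"
  shows "finite (factorizations a1 a2 x)"
proof (rule finite_subset)
  have "m \<le> x \<and> n \<le> x" if "m * a1 + n * a2 = x" for m n
  proof -
    have "m \<le> m * a1" "n \<le> n * a2"
      using assms by simp_all
    then show ?thesis
      using that by linarith
  qed
  then show "factorizations a1 a2 x \<subseteq> {..x} \<times> {..x}"
    unfolding factorizations_def by auto
qed simp

lemma tlengthsE:
  assumes "w \<in> tlengths t a1 a2 x"
  obtains m n where "m * a1 + n * a2 = x" "w = tnorm t (real m, real n)"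
  using assms unfolding tlengths_def factorizations_def by auto

lemma tnorm_in_tlengths:
  assumes "m * a1 + n * a2 = x"
  shows "tnorm t (real m, real n) \<in> tlengths t a1 a2 x"
  unfolding tlengths_def factorizations_def using assms by (intro image_eqI[of _ _ "(m, n)"]) auto

lemma finite_tdelta:
  assumes "0 < a1" "0 < a2"
  shows "finite (tdelta t a1 a2 x)"
proof (rule finite_subset)
  let ?L = "tlengths t a1 a2 x"
  show "tdelta t a1 a2 x \<subseteq> (\<lambda>(y, z). z - y) ` (?L \<times> ?L)"
    unfolding tdelta_def by force
  show "finite ((\<lambda>(y, z). z - y) ` (?L \<times> ?L))"
    unfolding tlengths_def using finite_factorizations[OF assms] by simp
qed

lemma Rats_imp_Ints_multiple:
  assumes "x \<in> \<rat>"
  obtains q :: nat where "0 < q" "real q * x \<in> \<int>"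
proof -
  obtain a b where "0 < b" "x = of_int a / of_int b"
    using Rats_cases'[OF assms] by metis
  then have "real (nat b) * x = of_int a"
    by simp
  then show ?thesis
    using that[of "nat b"] \<open>0 < b\<close> by simp
qed

lemma Ints_mult_offset_in_grid:
  fixes q a1 a2 n x :: nat and r :: real
  assumes "0 < q" "real q * r \<in> \<int>" "real n * a2 \<le> r * x" "r * x < real (n + a1) * a2"
  shows "\<exists>k<q * (a1 * a2). r * x - real n * a2 = real k / q"
proof -
  define d where "d = r * x - real n * a2"
  have "real q * d = (real q * r) * x - real (q * n * a2)"
    unfolding d_def by (simp add: algebra_simps)
  also have "\<dots> \<in> \<int>"
    by (intro Ints_diff Ints_mult[OF assms(2)] Ints_of_nat)
  finally obtain j where j: "real q * d = of_int j"
    using Ints_cases by metis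
  have "0 \<le> d" "d < real (a1 * a2)"
    using assms(3,4) unfolding d_def by (simp_all add: algebra_simps)
  then have "real (nat j) = real q * d"
    using j assms(1) by (metis of_int_0_le_iff of_nat_0_le_iff of_nat_nat zero_le_mult_iff)
  moreover have "real q * d < real (q * (a1 * a2))"
    using assms(1) \<open>d < real (a1 * a2)\<close> by simp
  ultimately show ?thesis
    using assms(1) unfolding d_def[symmetric] by (intro exI[of _ "nat j"]) (simp add: field_simps del: of_nat_mult)
qed

lemma closure_UN_subset_if_clustered:
  fixes A :: "nat \<Rightarrow> real set"
  assumes "\<And>x. finite (A x)" "finite F"
    and "\<forall>x\<ge>X. \<forall>v\<in>A x. v \<le> a \<or> b \<le> v \<or> (\<exists>\<phi>\<in>F. \<bar>v - \<phi>\<bar> \<le> e)"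
  shows "closure (\<Union>x. A x) \<subseteq> (\<Union>x<X. A x) \<union> {..a} \<union> {b..} \<union> (\<Union>\<phi>\<in>F. cball \<phi> e)"
proof (rule closure_minimal)
  show "(\<Union>x. A x) \<subseteq> (\<Union>x<X. A x) \<union> {..a} \<union> {b..} \<union> (\<Union>\<phi>\<in>F. cball \<phi> e)"
  proof
    fix v
    assume "v \<in> (\<Union>x. A x)"
    then obtain x where "v \<in> A x"
      by blast
    show "v \<in> (\<Union>x<X. A x) \<union> {..a} \<union> {b..} \<union> (\<Union>\<phi>\<in>F. cball \<phi> e)"
    proof (cases "x < X")
      case False
      then have "v \<le> a \<or> b \<le> v \<or> (\<exists>\<phi>\<in>F. \<bar>v - \<phi>\<bar> \<le> e)"
        using assms(3) \<open>v \<in> A x\<close> by (simp add: not_less)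
      then show ?thesis
        by (auto simp: dist_real_def abs_minus_commute)
    qed (use \<open>v \<in> A x\<close> in blast)
  qed
  show "closed ((\<Union>x<X. A x) \<union> {..a} \<union> {b..} \<union> (\<Union>\<phi>\<in>F. cball \<phi> e))"
    using assms(1,2) by (intro closed_Un closed_UN finite_imp_closed closed_atMost closed_atLeast closed_cball) auto
qed

lemma not_in_closure_UN_if_clustered:
  fixes A :: "nat \<Rightarrow> real set"
  assumes "\<And>x. finite (A x)" "finite F" "a < b"
    and clustered: "\<And>e. 0 < e \<Longrightarrow> \<exists>X. \<forall>x\<ge>X. \<forall>v\<in>A x. v \<le> a \<or> b \<le> v \<or> (\<exists>\<phi>\<in>F. \<bar>v - \<phi>\<bar> \<le> e)"
  shows "\<exists>c\<in>{a<..<b}. c \<notin> closure (\<Union>x. A x)"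
proof -
  have "{a<..<b} - F \<noteq> {}"
    using Diff_infinite_finite[OF assms(2)] assms(3) by (metis infinite_Ioo infinite_imp_nonempty)
  moreover have "open ({a<..<b} - F)"
    using assms(2) by (simp add: open_Diff finite_imp_closed)
  ultimately obtain c0 e where "0 < e" and c0: "ball c0 (2 * e) \<subseteq> {a<..<b} - F"
    unfolding open_contains_ball by (metis ex_in_conv field_sum_of_halves half_gt_zero mult_2)
  obtain X where "\<forall>x\<ge>X. \<forall>v\<in>A x. v \<le> a \<or> b \<le> v \<or> (\<exists>\<phi>\<in>F. \<bar>v - \<phi>\<bar> \<le> e)"
    using clustered[OF \<open>0 < e\<close>] by blast
  then have closure_sub: "closure (\<Union>x. A x) \<subseteq> (\<Union>x<X. A x) \<union> {..a} \<union> {b..} \<union> (\<Union>\<phi>\<in>F. cball \<phi> e)"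
    by (rule closure_UN_subset_if_clustered[OF assms(1,2)])
  have "finite (\<Union>x<X. A x)"
    using assms(1) by simp
  moreover have "infinite (ball c0 e)"
    using uncountable_infinite[OF uncountable_ball[OF \<open>0 < e\<close>]] .
  ultimately have "infinite (ball c0 e - (\<Union>x<X. A x))"
    using Diff_infinite_finite by blast
  then obtain c where c: "c \<in> ball c0 e" "c \<notin> (\<Union>x<X. A x)"
    by (metis Diff_iff infinite_imp_nonempty ex_in_conv)
  have "c \<in> ball c0 (2 * e)"
    using c(1) \<open>0 < e\<close> by simp
  then have "c \<in> {a<..<b}"
    using c0 by blast
  moreover have not_cball: "c \<notin> cball \<phi> e" if "\<phi> \<in> F" for \<phi>
  proof
    assume "c \<in> cball \<phi> e"
    then have "dist c0 c < e" "dist c \<phi> \<le> e"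
      using c(1) by (simp_all add: dist_commute)
    then have "\<phi> \<in> ball c0 (2 * e)"
      using dist_triangle[of c0 \<phi> c] by simp
    then show False
      using c0 that by blast
  qed
  ultimately have "c \<notin> (\<Union>x<X. A x) \<union> {..a} \<union> {b..} \<union> (\<Union>\<phi>\<in>F. cball \<phi> e)"
    using c(2) by auto
  then show ?thesis
    using closure_sub \<open>c \<in> {a<..<b}\<close> by blast
qed

locale two_generator_tlengths =
  fixes a1 a2 :: nat and t :: real
  assumes a1_pos: "0 < a1" and a1_less_a2: "a1 < a2" and t_gt_1: "1 < t"
begin

abbreviation \<mu> :: "real \<Rightarrow> real" where "\<mu> \<equiv> mu t a1 a2"
abbreviation \<rho> :: real where "\<rho> \<equiv> r0 t a1 a2"
abbreviation P :: real where "P \<equiv> Pder t a1 a2"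
abbreviation len :: "nat \<Rightarrow> nat \<Rightarrow> real" where "len m n \<equiv> tnorm t (real m, real n)"

lemma mu_0: "\<mu> 0 = 1 / a1"
  unfolding mu_def using t_gt_1 by (simp add: tnorm_zero_left tnorm_def powr_powr)

lemma mu_1: "\<mu> 1 = 1 / a2"
  unfolding mu_def using t_gt_1 by (simp add: tnorm_zero_left)

lemma continuous_on_mu: "continuous_on UNIV \<mu>"
  using convex_on_continuous[OF open_UNIV convex_on_mu] t_gt_1 by simp

lemma exists_mu_less_level: "\<exists>r\<in>{0<..<1}. \<mu> r < 1 / a2"
proof -
  define c where "c = (real a1 / a2) powr t"
  have "0 < c"
    unfolding c_def using a1_pos a1_less_a2 by simp
  have "((\<lambda>s. s powr (t - 1)) \<longlongrightarrow> 0) (at_right 0)"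
    using t_gt_1 by (intro tendsto_zero_powrI tendsto_ident_at tendsto_const eventually_at_rightI[of 0 1]) auto
  then have "\<forall>\<^sub>F s in at_right 0. s powr (t - 1) < c \<and> 0 < s \<and> s < 1"
    using \<open>0 < c\<close> by (intro eventually_conj order_tendstoD eventually_at_right_less eventually_at_rightI[of 0 1]) auto
  then obtain s where s: "s powr (t - 1) < c" "0 < s" "s < 1"
    using eventually_happens' trivial_limit_at_right_real by blast
  have "(s / a1) powr t = s * s powr (t - 1) / a1 powr t"
    using s by (simp add: powr_divide powr_diff)
  also have "\<dots> < s * c / a1 powr t"
    using s a1_pos by (intro divide_strict_right_mono mult_strict_left_mono) auto
  also have "\<dots> = s / a2 powr t"
    unfolding c_def using a1_pos by (simp add: powr_divide)
  finally have "(s / a1) powr t < s / a2 powr t" .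
  moreover have "((1 - s) / a2) powr t \<le> (1 - s) / a2 powr t"
    using s t_gt_1 powr_mono'[of 1 t "1 - s"] by (simp add: powr_divide divide_right_mono)
  moreover have "s / a2 powr t + (1 - s) / a2 powr t = 1 / a2 powr t"
    by (simp add: add_divide_distrib[symmetric])
  ultimately have "(s / a1) powr t + ((1 - s) / a2) powr t < 1 / a2 powr t"
    by linarith
  then have "\<bar>s / a1\<bar> powr t + \<bar>(1 - s) / a2\<bar> powr t < (1 / a2) powr t"
    using s by (simp add: powr_divide)
  then have "(\<bar>s / a1\<bar> powr t + \<bar>(1 - s) / a2\<bar> powr t) powr (1 / t) < ((1 / a2) powr t) powr (1 / t)"
    using t_gt_1 by (intro powr_less_mono2) auto
  then have "\<mu> (1 - s) < 1 / a2"
    unfolding mu_def tnorm_def using t_gt_1 by (simp add: powr_powr)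
  then show ?thesis
    using s by (intro bexI[of _ "1 - s"]) auto
qed

lemma
  shows r0_pos: "0 < \<rho>" and r0_less_1: "\<rho> < 1" and mu_r0: "\<mu> \<rho> = 1 / a2"
proof -
  define R where "R = {0..1} \<inter> \<mu> -` {1 / a2}"
  have r0_eq: "\<rho> = (LEAST r. r \<in> R)"
    unfolding r0_def R_def by simp
  obtain r where "r \<in> {0<..<1}" "\<mu> r < 1 / a2"
    using exists_mu_less_level by blast
  moreover have "1 / a2 \<le> \<mu> 0"
    using mu_0 a1_pos a1_less_a2 by (simp add: frac_le)
  ultimately obtain r' where "0 \<le> r'" "r' \<le> r" "\<mu> r' = 1 / a2"
    using IVT2'[of \<mu> r "1 / a2" 0] continuous_on_subset[OF continuous_on_mu] by auto
  then have "r' \<in> R"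
    using \<open>r \<in> {0<..<1}\<close> unfolding R_def by auto
  moreover have "closed R"
    unfolding R_def by (intro closed_Int closed_vimage continuous_on_mu) auto
  moreover have "bdd_below R"
    unfolding R_def by (auto intro: bdd_belowI[of _ 0])
  ultimately have "\<rho> \<in> R" "\<rho> \<le> r'"
    unfolding r0_eq using Least_mem_closed_real by blast+
  then show "\<rho> < 1" "\<mu> \<rho> = 1 / a2"
    using \<open>r' \<le> r\<close> \<open>r \<in> {0<..<1}\<close> unfolding R_def by auto
  have "\<mu> 0 \<noteq> 1 / a2"
    using mu_0 a1_less_a2 by simp
  then show "0 < \<rho>"
    using \<open>\<rho> \<in> R\<close> unfolding R_def by (cases "\<rho> = 0") auto
qed

lemma mu_le_level:
  assumes "\<rho> \<le> r" "r \<le> 1"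
  shows "\<mu> r \<le> 1 / a2"
proof -
  have "convex_on {\<rho>..1} \<mu>"
    using convex_on_subset[OF convex_on_mu] t_gt_1 by auto
  then have "\<mu> r \<le> max (\<mu> \<rho>) (\<mu> 1)"
    by (rule convex_on_le_max) (use assms in simp)
  then show ?thesis
    using mu_r0 mu_1 by simp
qed

lemma mu_has_derivative_r0: "(\<mu> has_real_derivative P) (at \<rho>)"
proof -
  define g where "g r = (((1 - r) / a1) powr t + (r / a2) powr t) powr (1 / t)" for r :: real
  obtain D where D: "(g has_real_derivative D) (at \<rho>)"
    unfolding g_def using r0_pos r0_less_1 a1_pos a1_less_a2
    by (atomize_elim, intro exI derivative_eq_intros refl) (auto simp: add_pos_pos)
  have "(\<mu> has_real_derivative D) (at \<rho>)"
  proof (rule has_field_derivative_transform_within_open[OF D, of "{0<..<1}"])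
    show "g r = \<mu> r" if "r \<in> {0<..<1}" for r
      using that unfolding g_def mu_def tnorm_def by simp
  qed (use r0_pos r0_less_1 in auto)
  then show ?thesis
    unfolding Pder_def using DERIV_imp_deriv by metis
qed

lemma Pder_nonpos: "P \<le> 0"
proof -
  have "\<mu> 1 - \<mu> \<rho> \<ge> P * (1 - \<rho>)"
    using convex_on_imp_above_tangent[OF convex_on_mu] mu_has_derivative_r0 t_gt_1 by simp
  then show ?thesis
    using r0_less_1 mu_r0 mu_1 by (simp add: mult_le_0_iff)
qed

lemma len_eq_mu:
  assumes "m * a1 + n * a2 = x" "0 < x"
  shows "len m n = x * \<mu> (real n * a2 / x)"
proof -
  have "real x - real n * a2 = m * a1"
    using real_factorization[OF assms(1)] by simp
  moreover have "1 - real n * a2 / x = (real x - real n * a2) / x"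
    using assms(2) by (simp add: diff_divide_distrib)
  ultimately have "(1 - real n * a2 / x) / a1 = (m * a1 / x) / a1"
    by simp
  then have "(1 - real n * a2 / x) / a1 = (1 / x) * m"
    using a1_pos by simp
  moreover have "(real n * a2 / x) / a2 = (1 / x) * n"
    using a1_less_a2 by simp
  ultimately have "\<mu> (real n * a2 / x) = (1 / x) * len m n"
    unfolding mu_def using tnorm_scale[of t "1 / x"] t_gt_1 by simp
  then show ?thesis
    using assms(2) by simp
qed

lemma len_le_level:
  assumes "m * a1 + n * a2 = x" "0 < x" "\<rho> * x \<le> real n * a2"
  shows "len m n \<le> x / a2"
proof -
  have "n * a2 \<le> x"
    using assms(1) by auto
  then have "real n * a2 \<le> x"
    by (metis of_nat_le_iff of_nat_mult)
  then have "\<mu> (real n * a2 / x) \<le> 1 / a2"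
    using mu_le_level assms(2,3) by (simp add: field_simps)
  then show ?thesis
    using len_eq_mu[OF assms(1,2)] assms(2) mult_left_mono[of _ _ "real x"] by fastforce
qed

text \<open>Left of \<open>r0\<close> the convex function \<open>mu\<close> decreases with slope at least \<open>-P\<close>.\<close>
lemma len_ge_below_r0:
  fixes s :: real
  assumes "m * a1 + n * a2 = x" "0 < x" "real n * a2 \<le> s" "s \<le> \<rho> * x"
  shows "x * \<mu> (s / x) - P * (s - real n * a2) \<le> len m n"
proof -
  have "real n * a2 / x \<le> s / x"
    using assms(2,3) by (intro divide_right_mono) auto
  moreover have "s / x \<le> \<rho>"
    using assms(2,4) by (subst pos_divide_le_eq) auto
  ultimately have "\<mu> (s / x) - \<mu> (real n * a2 / x) \<le> P * (s / x - real n * a2 / x)"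
    by (intro convex_on_diff_le_deriv_mult[OF convex_on_mu mu_has_derivative_r0]) (use t_gt_1 in auto)
  then have "x * (\<mu> (s / x) - \<mu> (real n * a2 / x)) \<le> x * (P * (s / x - real n * a2 / x))"
    using assms(2) by (intro mult_left_mono) auto
  also have "\<dots> = P * (s - real n * a2)"
    using assms(2) by (simp add: field_simps)
  finally have "x * \<mu> (s / x) - x * \<mu> (real n * a2 / x) \<le> P * (s - real n * a2)"
    by (simp add: right_diff_distrib)
  then show ?thesis
    using len_eq_mu[OF assms(1,2)] by linarith
qed

lemma real_le_len: "real n \<le> len m n"
  using abs_snd_le_tnorm[where u = "real m" and v = "real n"] t_gt_1 by simp

lemma len_shift_le:
  assumes "a2 \<le> m"
  shows "len (m - a2) (n + a1) \<le> len m n + a1"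
proof -
  have "len (m - a2) (n + a1) \<le> len (m - a2) n + tnorm t (0, real a1)"
    using tnorm_triangle[of t "real (m - a2)" 0 "real n" "real a1"] t_gt_1 by simp
  also have "len (m - a2) n \<le> len m n"
    using t_gt_1 assms by (intro tnorm_mono) auto
  finally show ?thesis
    using tnorm_zero_left t_gt_1 by simp
qed

lemma exists_len_within_a1_below:
  fixes z :: real
  assumes "m * a1 + n * a2 = x" "len m n < z" "z \<le> x / a2"
  shows "\<exists>w\<in>tlengths t a1 a2 x. z - a1 \<le> w \<and> w < z"
  using assms(1,2)
proof (induction m arbitrary: n rule: less_induct)
  case (less m)
  show ?case
  proof (cases "a2 \<le> m \<and> len m n < z - a1")
    case True
    have "(m - a2) * a1 + (n + a1) * a2 = x"
      using factorization_shift[OF less.prems(1)] True by blast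
    moreover have "len (m - a2) (n + a1) < z"
      using len_shift_le[of m n] True by linarith
    moreover have "m - a2 < m"
      using True a1_pos a1_less_a2 by simp
    ultimately show ?thesis
      using less.IH by blast
  next
    case False
    have "z - a1 \<le> len m n"
    proof (cases "a2 \<le> m")
      case False
      then have "real m * a1 \<le> real a2 * a1"
        by (intro mult_right_mono) auto
      then have "x / a2 - a1 \<le> n"
        using real_factorization[OF less.prems(1)] a1_less_a2 by (simp add: field_simps)
      then show ?thesis
        using real_le_len[of n m] assms(3) by linarith
    qed (use False in simp)
    then show ?thesis
      using tnorm_in_tlengths[OF less.prems(1)] less.prems(2) by blast
  qed
qed

lemma len_le_max:
  assumes "m1 * a1 + n1 * a2 = x" "m * a1 + n * a2 = x" "m2 * a1 + n2 * a2 = x" "0 < x"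
    and "n1 \<le> n" "n \<le> n2"
  shows "len m n \<le> max (len m1 n1) (len m2 n2)"
proof -
  let ?r = "\<lambda>k. real k * a2 / x"
  have "?r n1 \<le> ?r n" "?r n \<le> ?r n2"
    using assms(4-6) by (auto intro!: divide_right_mono mult_right_mono)
  moreover have "convex_on {?r n1..?r n2} \<mu>"
    using convex_on_subset[OF convex_on_mu] t_gt_1 by auto
  ultimately have "\<mu> (?r n) \<le> max (\<mu> (?r n1)) (\<mu> (?r n2))"
    using convex_on_le_max by simp
  then have "x * \<mu> (?r n) \<le> max (x * \<mu> (?r n1)) (x * \<mu> (?r n2))"
    using assms(4) mult_left_mono[of _ _ "real x"] by (fastforce simp: max_mult_distrib_left)
  then show ?thesis
    using len_eq_mu[OF assms(1,4)] len_eq_mu[OF assms(2,4)] len_eq_mu[OF assms(3,4)] by simp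
qed

text \<open>The factorization \<open>(m, n)\<close> of \<open>x\<close> with \<open>n a2 \<le> r0 x < (n + a1) a2\<close> is the last one before
  \<open>r0\<close>. The only gaps not forced above \<open>-P a1 a2\<close> by convexity are those between it and
  either its shift \<open>(m - a2, n + a1)\<close> or a factorization \<open>(m', n')\<close> with \<open>m' < a2\<close>.\<close>
definition shift_gaps :: "nat \<Rightarrow> real set" where
  "shift_gaps x = {len m n - len (m - a2) (n + a1) | m n.
     m * a1 + n * a2 = x \<and> a2 \<le> m \<and> real n * a2 \<le> \<rho> * x \<and> \<rho> * x < real (n + a1) * a2}"

definition top_gaps :: "nat \<Rightarrow> real set" where
  "top_gaps x = {len m n - len m' n' | m n m' n'.
     m * a1 + n * a2 = x \<and> real n * a2 \<le> \<rho> * x \<and> \<rho> * x < real (n + a1) * a2 \<and>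
     m' * a1 + n' * a2 = x \<and> m' < a2}"

lemma snd_less_if_len_less:
  assumes z: "mz * a1 + nz * a2 = x" and y: "my * a1 + ny * a2 = x" and "0 < x"
    and "real nz * a2 \<le> \<rho> * x" and "len my ny < len mz nz"
  shows "nz < ny"
proof (rule ccontr)
  assume "\<not> nz < ny"
  then have "real ny * a2 \<le> real nz * a2"
    by (intro mult_right_mono) auto
  then have "x * \<mu> (real nz * a2 / x) - P * (real nz * a2 - real ny * a2) \<le> len my ny"
    using len_ge_below_r0[OF y \<open>0 < x\<close>] assms(4) by blast
  moreover have "P * (real nz * a2 - real ny * a2) \<le> 0"
    using Pder_nonpos \<open>real ny * a2 \<le> real nz * a2\<close> by (simp add: mult_nonpos_nonneg)
  ultimately show False
    using len_eq_mu[OF z \<open>0 < x\<close>] assms(5) by linarith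
qed

lemma len_gap_ge_far_below_r0:
  assumes z: "mz * a1 + nz * a2 = x" and y: "my * a1 + ny * a2 = x" and "0 < x"
    and "nz + a1 \<le> ny" and "real (nz + a1) * a2 \<le> \<rho> * x"
  shows "- P * a1 * a2 \<le> len mz nz - len my ny"
proof -
  define s where "s = min (real ny * a2) (\<rho> * x)"
  have "len my ny \<le> x * \<mu> (s / x)"
  proof (cases "real ny * a2 \<le> \<rho> * x")
    case True
    then show ?thesis
      using len_eq_mu[OF y \<open>0 < x\<close>] unfolding s_def by simp
  next
    case False
    then show ?thesis
      using len_le_level[OF y \<open>0 < x\<close>] mu_r0 \<open>0 < x\<close> unfolding s_def by simp
  qed
  moreover have "real (nz + a1) * a2 \<le> s"
    using assms(4,5) unfolding s_def by (simp add: mult_right_mono)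
  moreover have "x * \<mu> (s / x) - P * (s - real nz * a2) \<le> len mz nz"
  proof (rule len_ge_below_r0[OF z \<open>0 < x\<close>])
    show "real nz * a2 \<le> s"
      using \<open>real (nz + a1) * a2 \<le> s\<close> by (smt (verit) mult_right_mono of_nat_0_le_iff of_nat_add)
    show "s \<le> \<rho> * x"
      unfolding s_def by simp
  qed
  moreover have "- P * (real a1 * a2) \<le> - P * (s - real nz * a2)"
    using Pder_nonpos \<open>real (nz + a1) * a2 \<le> s\<close> by (intro mult_left_mono) (simp_all add: algebra_simps)
  ultimately show ?thesis
    by (simp only: mult.assoc)
qed

lemma len_below_eq_shift_or_top:
  assumes z: "mz * a1 + nz * a2 = x" and y: "my * a1 + ny * a2 = x" and "0 < x"
    and "nz + a1 \<le> ny" "a2 \<le> mz" "\<rho> * x < real (nz + a1) * a2" "x / a2 < len mz nz"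
    and consecutive: "\<forall>w\<in>tlengths t a1 a2 x. \<not> (len my ny < w \<and> w < len mz nz)"
  shows "len my ny = len (mz - a2) (nz + a1)
    \<or> (\<exists>m' n'. m' * a1 + n' * a2 = x \<and> m' < a2 \<and> len my ny = len m' n')"
proof -
  have shift: "(mz - a2) * a1 + (nz + a1) * a2 = x"
    using factorization_shift[OF z \<open>a2 \<le> mz\<close>] .
  obtain m' n' where top: "m' * a1 + n' * a2 = x" "m' < a2" "ny \<le> n'"
    using exists_factorization_fst_less[OF y] a1_pos a1_less_a2 by auto
  have below: "len m n \<le> len my ny" if "m * a1 + n * a2 = x" "nz + a1 \<le> n" for m n
  proof -
    have "\<rho> * x \<le> real n * a2"
      using assms(6) that(2) by (smt (verit) mult_right_mono of_nat_le_iff of_nat_0_le_iff)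
    then have "len m n < len mz nz"
      using len_le_level[OF that(1) \<open>0 < x\<close>] assms(7) by linarith
    then show ?thesis
      using consecutive tnorm_in_tlengths[OF that(1)] by fastforce
  qed
  have "len my ny \<le> max (len (mz - a2) (nz + a1)) (len m' n')"
    using len_le_max[OF shift y top(1) \<open>0 < x\<close> assms(4) top(3)] .
  moreover have "max (len (mz - a2) (nz + a1)) (len m' n') \<le> len my ny"
    using below[OF shift] below[OF top(1)] top(3) assms(4) by simp
  ultimately have "len my ny = max (len (mz - a2) (nz + a1)) (len m' n')"
    by linarith
  then show ?thesis
    using top(1,2) by (metis max_def)
qed

lemma gap_above_level:
  assumes "coprime a1 a2" "0 < x" and y: "my * a1 + ny * a2 = x" and z: "mz * a1 + nz * a2 = x"
    and "len my ny < len mz nz" "x / a2 < len mz nz"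
    and consecutive: "\<forall>w\<in>tlengths t a1 a2 x. \<not> (len my ny < w \<and> w < len mz nz)"
  shows "- P * a1 * a2 \<le> len mz nz - len my ny \<or> len mz nz - len my ny \<in> shift_gaps x \<union> top_gaps x"
proof -
  have "real nz * a2 < \<rho> * x"
    using len_le_level[OF z \<open>0 < x\<close>] assms(6) by fastforce
  then have "nz < ny"
    using snd_less_if_len_less[OF z y \<open>0 < x\<close>] assms(5) by simp
  then have lattice: "nz + a1 \<le> ny" "a2 \<le> mz"
    using factorization_lattice_step[OF assms(1), of mz nz my ny] y z by auto
  show ?thesis
  proof (cases "real (nz + a1) * a2 \<le> \<rho> * x")
    case True
    then show ?thesis
      using len_gap_ge_far_below_r0[OF z y \<open>0 < x\<close> lattice(1)] by simp
  next
    case False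
    then have near: "real nz * a2 \<le> \<rho> * x" "\<rho> * x < real (nz + a1) * a2"
      using \<open>real nz * a2 < \<rho> * x\<close> by auto
    from len_below_eq_shift_or_top[OF z y \<open>0 < x\<close> lattice near(2) assms(6) consecutive]
    consider "len my ny = len (mz - a2) (nz + a1)"
      | m' n' where "m' * a1 + n' * a2 = x" "m' < a2" "len my ny = len m' n'"
      by blast
    then show ?thesis
    proof cases
      case 1
      then have "len mz nz - len my ny \<in> shift_gaps x"
        unfolding shift_gaps_def mem_Collect_eq using z lattice(2) near
        by (intro exI[of _ mz] exI[of _ nz]) simp
      then show ?thesis
        by simp
    next
      case 2
      then have "len mz nz - len my ny \<in> top_gaps x"
        unfolding top_gaps_def mem_Collect_eq using z near
        by (intro exI[of _ mz] exI[of _ nz] exI[of _ m'] exI[of _ n']) simp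
      then show ?thesis
        by simp
    qed
  qed
qed

lemma tdelta_cases:
  assumes "coprime a1 a2" "0 < x" "v \<in> tdelta t a1 a2 x"
  shows "v \<le> a1 \<or> - P * a1 * a2 \<le> v \<or> v \<in> shift_gaps x \<union> top_gaps x"
proof -
  obtain y z where v: "v = z - y" and "y \<in> tlengths t a1 a2 x" "z \<in> tlengths t a1 a2 x" "y < z"
    and consecutive: "\<forall>w\<in>tlengths t a1 a2 x. \<not> (y < w \<and> w < z)"
    using assms(3) unfolding tdelta_def by blast
  then obtain my ny mz nz where y: "my * a1 + ny * a2 = x" "y = len my ny"
    and z: "mz * a1 + nz * a2 = x" "z = len mz nz"
    by (metis tlengthsE)
  show ?thesis
  proof (cases "z \<le> x / a2")
    case True
    then obtain w where "w \<in> tlengths t a1 a2 x" "z - a1 \<le> w" "w < z"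
      using exists_len_within_a1_below[OF y(1)] \<open>y < z\<close> y(2) by blast
    then show ?thesis
      using consecutive v by fastforce
  next
    case False
    then show ?thesis
      using gap_above_level[OF assms(1,2) y(1) z(1)] \<open>y < z\<close> consecutive v y(2) z(2) by simp
  qed
qed

lemma len_near_r0:
  assumes "0 < e"
  shows "\<exists>X. \<forall>x\<ge>X. \<forall>m n. m * a1 + n * a2 = x \<and> \<bar>\<rho> * x - real n * a2\<bar> \<le> real a1 * a2 \<longrightarrow>
    \<bar>len m n - (x / a2 - P * (\<rho> * x - real n * a2))\<bar> \<le> e"
proof -
  obtain X where "0 < X" and X:
    "\<forall>y\<ge>X. \<forall>s. \<bar>s\<bar> \<le> real a1 * a2 \<longrightarrow> \<bar>y * (\<mu> (\<rho> + s / y) - \<mu> \<rho>) - P * s\<bar> \<le> e"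
    using has_real_derivative_scaled_uniform[OF mu_has_derivative_r0 assms, of "real a1 * a2"] by (elim exE conjE)
  have "\<bar>len m n - (x / a2 - P * (\<rho> * x - real n * a2))\<bar> \<le> e"
    if "nat \<lceil>X\<rceil> \<le> x" "m * a1 + n * a2 = x" "\<bar>\<rho> * x - real n * a2\<bar> \<le> real a1 * a2" for x m n
  proof -
    define s where "s = real n * a2 - \<rho> * x"
    have "X \<le> x"
      using that(1) by (simp add: nat_ceiling_le_eq)
    then have "0 < x"
      using \<open>0 < X\<close> by linarith
    have "\<rho> + s / x = real n * a2 / x"
      using \<open>0 < x\<close> unfolding s_def by (simp add: field_simps)
    then have "len m n - (x / a2 - P * (\<rho> * x - real n * a2)) = x * (\<mu> (\<rho> + s / x) - \<mu> \<rho>) - P * s"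
      using len_eq_mu[OF that(2) \<open>0 < x\<close>] mu_r0 unfolding s_def by (simp add: algebra_simps)
    moreover have "\<bar>s\<bar> \<le> real a1 * a2"
      using that(3) unfolding s_def by linarith
    ultimately show ?thesis
      using X \<open>X \<le> x\<close> by simp
  qed
  then show ?thesis
    by blast
qed

lemma shift_gaps_near:
  assumes "0 < e"
  shows "\<exists>X. \<forall>x\<ge>X. \<forall>v\<in>shift_gaps x. \<bar>v - (- P * a1 * a2)\<bar> \<le> e"
proof -
  obtain X where X: "\<And>x m n. X \<le> x \<Longrightarrow> m * a1 + n * a2 = x \<Longrightarrow> \<bar>\<rho> * x - real n * a2\<bar> \<le> real a1 * a2 \<Longrightarrow>
      \<bar>len m n - (x / a2 - P * (\<rho> * x - real n * a2))\<bar> \<le> e / 2"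
    using len_near_r0[of "e / 2"] assms by (metis half_gt_zero)
  have "\<bar>v - (- P * a1 * a2)\<bar> \<le> e" if "X \<le> x" and v_mem: "v \<in> shift_gaps x" for x v
  proof -
    obtain m n where v: "v = len m n - len (m - a2) (n + a1)" and fac: "m * a1 + n * a2 = x" "a2 \<le> m"
      and near: "real n * a2 \<le> \<rho> * x" "\<rho> * x < real (n + a1) * a2"
      using v_mem unfolding shift_gaps_def by blast
    define A where "A = len m n - (x / a2 - P * (\<rho> * x - real n * a2))"
    define B where "B = len (m - a2) (n + a1) - (x / a2 - P * (\<rho> * x - real (n + a1) * a2))"
    have "\<bar>A\<bar> \<le> e / 2"
      unfolding A_def using X[OF \<open>X \<le> x\<close> fac(1)] near by (simp add: algebra_simps)
    moreover have "\<bar>B\<bar> \<le> e / 2"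
      unfolding B_def using X[OF \<open>X \<le> x\<close> factorization_shift[OF fac]] near by (simp add: algebra_simps)
    moreover have "v - (- P * a1 * a2) = A - B"
      unfolding v A_def B_def by (simp add: algebra_simps)
    ultimately show ?thesis
      using abs_triangle_ineq4[of A B] by linarith
  qed
  then show ?thesis
    by blast
qed

lemma len_le_snd_eventually:
  fixes e :: real
  assumes "0 < e"
  shows "\<exists>X. \<forall>x\<ge>X. \<forall>m n. m * a1 + n * a2 = x \<and> m < a2 \<longrightarrow> len m n \<le> real n + e"
proof -
  obtain N where N: "\<forall>n\<ge>N. \<forall>m. 0 \<le> m \<and> m \<le> real a2 \<longrightarrow> tnorm t (m, n) \<le> n + e"
    using tnorm_le_snd_eventually[OF t_gt_1 assms] by blast
  have "len m n \<le> real n + e" if "nat \<lceil>N\<rceil> * a2 + a1 * a2 \<le> x" "m * a1 + n * a2 = x" "m < a2" for x m n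
  proof -
    have "m * a1 \<le> a1 * a2"
      using that(3) by simp
    then have "nat \<lceil>N\<rceil> * a2 \<le> n * a2"
      using that(1,2) by linarith
    then have "N \<le> n"
      using a1_less_a2 by (simp add: nat_ceiling_le_eq)
    then show ?thesis
      using N that(3) by simp
  qed
  then show ?thesis
    by blast
qed

lemma top_gaps_near_grid:
  assumes "0 < q" "real q * \<rho> \<in> \<int>" "0 < e"
  shows "\<exists>X. \<forall>x\<ge>X. \<forall>v\<in>top_gaps x.
    \<exists>k<q * (a1 * a2). \<exists>m'<a2. \<bar>v - (- P * k / q + a1 * m' / a2)\<bar> \<le> e"
proof -
  obtain X1 where X1: "\<forall>x\<ge>X1. \<forall>m n. m * a1 + n * a2 = x \<and> \<bar>\<rho> * x - real n * a2\<bar> \<le> real a1 * a2 \<longrightarrow>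
      \<bar>len m n - (x / a2 - P * (\<rho> * x - real n * a2))\<bar> \<le> e / 2"
    using len_near_r0[of "e / 2"] assms(3) by auto
  obtain X2 where X2: "\<forall>x\<ge>X2. \<forall>m n. m * a1 + n * a2 = x \<and> m < a2 \<longrightarrow> len m n \<le> real n + e / 2"
    using len_le_snd_eventually[of "e / 2"] assms(3) by auto
  have "\<exists>k<q * (a1 * a2). \<exists>m'<a2. \<bar>v - (- P * k / q + a1 * m' / a2)\<bar> \<le> e"
    if "max X1 X2 \<le> x" and v_mem: "v \<in> top_gaps x" for x v
  proof -
    obtain m n m' n' where v: "v = len m n - len m' n'" and fac: "m * a1 + n * a2 = x"
      and near: "real n * a2 \<le> \<rho> * x" "\<rho> * x < real (n + a1) * a2"
      and top: "m' * a1 + n' * a2 = x" "m' < a2"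
      using v_mem unfolding top_gaps_def by blast
    obtain k where k: "k < q * (a1 * a2)" "\<rho> * x - real n * a2 = real k / q"
      using Ints_mult_offset_in_grid[OF assms(1,2) near] by blast
    have "X1 \<le> x" "X2 \<le> x" "\<bar>\<rho> * x - real n * a2\<bar> \<le> real a1 * a2"
      using that(1) near by (simp_all add: algebra_simps)
    define A where "A = len m n - (x / a2 - P * (\<rho> * x - real n * a2))"
    define B where "B = len m' n' - n'"
    have "\<bar>A\<bar> \<le> e / 2"
      unfolding A_def using X1 \<open>X1 \<le> x\<close> fac \<open>\<bar>\<rho> * x - real n * a2\<bar> \<le> real a1 * a2\<close> by blast
    moreover have "len m' n' \<le> real n' + e / 2"
      using X2 \<open>X2 \<le> x\<close> top by blast
    then have "\<bar>B\<bar> \<le> e / 2"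
      unfolding B_def using real_le_len[of n' m'] by simp
    moreover have "v - (- P * k / q + a1 * m' / a2) = A - B"
      unfolding v A_def B_def k(2) using real_factorization[OF top(1)] a1_less_a2
      by (simp add: field_simps)
    ultimately have "\<bar>v - (- P * k / q + a1 * m' / a2)\<bar> \<le> e"
      using abs_triangle_ineq4[of A B] by linarith
    then show ?thesis
      using k(1) top(2) by blast
  qed
  then show ?thesis
    by blast
qed

lemma tdelta_clustered:
  assumes "coprime a1 a2" "\<rho> \<in> \<rat>"
  obtains F where "finite F"
    "\<And>e. 0 < e \<Longrightarrow> \<exists>X. \<forall>x\<ge>X. \<forall>v\<in>tdelta t a1 a2 x.
       v \<le> a1 \<or> - P * a1 * a2 \<le> v \<or> (\<exists>\<phi>\<in>F. \<bar>v - \<phi>\<bar> \<le> e)"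
proof -
  obtain q where q: "0 < q" "real q * \<rho> \<in> \<int>"
    using Rats_imp_Ints_multiple[OF assms(2)] by blast
  define F where "F = insert (- P * a1 * a2)
    ((\<lambda>(k, m). - P * k / q + a1 * m / a2) ` ({..<q * (a1 * a2)} \<times> {..<a2}))"
  have "\<exists>X. \<forall>x\<ge>X. \<forall>v\<in>tdelta t a1 a2 x. v \<le> a1 \<or> - P * a1 * a2 \<le> v \<or> (\<exists>\<phi>\<in>F. \<bar>v - \<phi>\<bar> \<le> e)"
    if "0 < e" for e
  proof -
    obtain X1 where X1: "\<forall>x\<ge>X1. \<forall>v\<in>shift_gaps x. \<bar>v - (- P * a1 * a2)\<bar> \<le> e"
      using shift_gaps_near[OF \<open>0 < e\<close>] by blast
    obtain X2 where X2: "\<forall>x\<ge>X2. \<forall>v\<in>top_gaps x.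
        \<exists>k<q * (a1 * a2). \<exists>m'<a2. \<bar>v - (- P * k / q + a1 * m' / a2)\<bar> \<le> e"
      using top_gaps_near_grid[OF q \<open>0 < e\<close>] by blast
    have "v \<le> a1 \<or> - P * a1 * a2 \<le> v \<or> (\<exists>\<phi>\<in>F. \<bar>v - \<phi>\<bar> \<le> e)"
      if "max 1 (max X1 X2) \<le> x" "v \<in> tdelta t a1 a2 x" for x v
    proof -
      have "v \<in> shift_gaps x \<Longrightarrow> \<exists>\<phi>\<in>F. \<bar>v - \<phi>\<bar> \<le> e"
        using X1 that(1) unfolding F_def by auto
      moreover have "v \<in> top_gaps x \<Longrightarrow> \<exists>\<phi>\<in>F. \<bar>v - \<phi>\<bar> \<le> e"
        using X2 that(1) unfolding F_def by fastforce
      ultimately show ?thesis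
        using tdelta_cases[OF assms(1) _ that(2)] that(1) by fastforce
    qed
    then show ?thesis
      by blast
  qed
  moreover have "finite F"
    unfolding F_def by simp
  ultimately show ?thesis
    using that by blast
qed

lemma tdelta_S_misses_point:
  assumes "coprime a1 a2" "\<rho> \<in> \<rat>" "a1 < - P * a1 * a2"
  shows "\<exists>c\<in>{a1<..<min (- P * a1 * a2) a2}. c \<notin> closure (tdelta_S t a1 a2)"
proof -
  obtain F where "finite F" and clustered: "\<And>e. 0 < e \<Longrightarrow> \<exists>X. \<forall>x\<ge>X. \<forall>v\<in>tdelta t a1 a2 x.
       v \<le> a1 \<or> - P * a1 * a2 \<le> v \<or> (\<exists>\<phi>\<in>F. \<bar>v - \<phi>\<bar> \<le> e)"
    using tdelta_clustered[OF assms(1,2)] by blast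
  have "\<exists>c\<in>{a1<..<min (- P * a1 * a2) a2}. c \<notin> closure (\<Union>x. tdelta t a1 a2 x)"
  proof (rule not_in_closure_UN_if_clustered[OF _ \<open>finite F\<close>])
    show "finite (tdelta t a1 a2 x)" for x
      using finite_tdelta a1_pos a1_less_a2 by simp
    show "real a1 < min (- P * a1 * a2) a2"
      using assms(3) a1_less_a2 by simp
    show "\<exists>X. \<forall>x\<ge>X. \<forall>v\<in>tdelta t a1 a2 x.
        v \<le> a1 \<or> min (- P * a1 * a2) a2 \<le> v \<or> (\<exists>\<phi>\<in>F. \<bar>v - \<phi>\<bar> \<le> e)" if "0 < e" for e
      using clustered[OF that] by (meson min.coboundedI1 order_trans)
  qed
  moreover have "closure (tdelta_S t a1 a2) \<subseteq> closure (\<Union>x. tdelta t a1 a2 x)"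
    unfolding tdelta_S_def by (intro closure_mono) blast
  ultimately show ?thesis
    by blast
qed

end

theorem proposition3:
  fixes a1 a2 :: nat and t :: real
  assumes "1 < a1" and "a1 < a2" and "coprime a1 a2" and "1 < t"
    and "r0 t a1 a2 \<in> \<rat>"
    and "\<bar>real a1 * real a2 * Pder t a1 a2\<bar> > real a1"
  shows "perspicacious t a1 a2"
proof -
  interpret two_generator_tlengths a1 a2 t
    using assms by unfold_locales simp_all
  have "real a1 * real a2 * P \<le> 0"
    using Pder_nonpos by (simp add: mult_nonneg_nonpos)
  then have "a1 < - P * a1 * a2"
    using assms(6) by (simp add: algebra_simps)
  then obtain c where "c \<in> {a1<..<min (- P * a1 * a2) a2}" "c \<notin> closure (tdelta_S t a1 a2)"
    using tdelta_S_misses_point assms(3,5) by blast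
  moreover have "{a1<..<min (- P * a1 * a2) a2} \<subseteq> {0..real a2}"
    by auto
  ultimately show ?thesis
    unfolding perspicacious_def dull_def by blast
qed

end
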